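(* Let $G=(V,E)$ be a finite, simple, connected reflective graph, let $x\sim y$ be adjacent vertices and $z\in V$. Then there exist $x',y'\in B_1(z)$ with $x'\sim y'$ and $(x,y)\parallel(x',y')$.
   Context: $d$ is the combinatorial distance and $B_1(z)=\{v: d(v,z)\leq 1\}$. For adjacent $x\sim y$ let $V_x^y=\{v: d(v,x)<d(v,y)\}$, $V^{xy}=\{v:d(v,x)=d(v,y)\}$. A reflection from $x$ to $y$ is a graph automorphism $\phi$ with $\phi\circ\phi=\mathrm{id}$, $\phi(x)=y$, such that the edges between $V_x^y$ and $V_y^x$ are exactly $\{\{x',\phi(x')\}:x'\in V_x^y\}$ and $\phi$ fixes $V^{xy}$ pointwise. $G$ is reflective if every edge admits a reflection. For edges $x\sim y$, $x'\sim y'$ we write $(x,y)\parallel(x',y')$ if $x'\in V_x^y$ and $y'\in V_y^x$. *)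

theory Defs
  imports Main
begin

definition simple_graph :: "'a set \<Rightarrow> ('a \<Rightarrow> 'a \<Rightarrow> bool) \<Rightarrow> bool" where
  "simple_graph V E \<longleftrightarrow> (\<forall>u v. E u v \<longrightarrow> u \<in> V \<and> v \<in> V)
      \<and> (\<forall>u v. E u v \<longrightarrow> E v u) \<and> (\<forall>u. \<not> E u u)"

text \<open>Walks as vertex lists; a walk of length n has n+1 vertices.\<close>
fun is_walk :: "('a \<Rightarrow> 'a \<Rightarrow> bool) \<Rightarrow> 'a list \<Rightarrow> bool" where
  "is_walk E [] = False"
| "is_walk E [v] = True"
| "is_walk E (u # v # vs) = (E u v \<and> is_walk E (v # vs))"

definition walk_between :: "'a set \<Rightarrow> ('a \<Rightarrow> 'a \<Rightarrow> bool) \<Rightarrow> 'a \<Rightarrow> 'a \<Rightarrow> nat \<Rightarrow> bool" where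
  "walk_between V E u v n \<longleftrightarrow> (\<exists>ws. is_walk E ws \<and> set ws \<subseteq> V \<and> hd ws = u \<and> last ws = v
      \<and> length ws = Suc n)"

definition connected_graph :: "'a set \<Rightarrow> ('a \<Rightarrow> 'a \<Rightarrow> bool) \<Rightarrow> bool" where
  "connected_graph V E \<longleftrightarrow> (\<forall>u\<in>V. \<forall>v\<in>V. \<exists>n. walk_between V E u v n)"

text \<open>Combinatorial distance (meaningful for connected graphs).\<close>
definition gdist :: "'a set \<Rightarrow> ('a \<Rightarrow> 'a \<Rightarrow> bool) \<Rightarrow> 'a \<Rightarrow> 'a \<Rightarrow> nat" where
  "gdist V E u v = (LEAST n. walk_between V E u v n)"

definition ball1 :: "'a set \<Rightarrow> ('a \<Rightarrow> 'a \<Rightarrow> bool) \<Rightarrow> 'a \<Rightarrow> 'a set" where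
  "ball1 V E z = {v \<in> V. gdist V E v z \<le> 1}"

definition halfspace :: "'a set \<Rightarrow> ('a \<Rightarrow> 'a \<Rightarrow> bool) \<Rightarrow> 'a \<Rightarrow> 'a \<Rightarrow> 'a set" where
  "halfspace V E x y = {v \<in> V. gdist V E v x < gdist V E v y}"

definition equidist :: "'a set \<Rightarrow> ('a \<Rightarrow> 'a \<Rightarrow> bool) \<Rightarrow> 'a \<Rightarrow> 'a \<Rightarrow> 'a set" where
  "equidist V E x y = {v \<in> V. gdist V E v x = gdist V E v y}"

definition graph_automorphism :: "'a set \<Rightarrow> ('a \<Rightarrow> 'a \<Rightarrow> bool) \<Rightarrow> ('a \<Rightarrow> 'a) \<Rightarrow> bool" where
  "graph_automorphism V E \<phi> \<longleftrightarrow> bij_betw \<phi> V V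
      \<and> (\<forall>u\<in>V. \<forall>v\<in>V. E u v \<longleftrightarrow> E (\<phi> u) (\<phi> v))"

definition reflection :: "'a set \<Rightarrow> ('a \<Rightarrow> 'a \<Rightarrow> bool) \<Rightarrow> 'a \<Rightarrow> 'a \<Rightarrow> ('a \<Rightarrow> 'a) \<Rightarrow> bool" where
  "reflection V E x y \<phi> \<longleftrightarrow> graph_automorphism V E \<phi>
      \<and> (\<forall>v\<in>V. \<phi> (\<phi> v) = v)
      \<and> \<phi> x = y
      \<and> {{a, b} | a b. a \<in> halfspace V E x y \<and> b \<in> halfspace V E y x \<and> E a b}
          = {{a, \<phi> a} | a. a \<in> halfspace V E x y}
      \<and> (\<forall>v\<in>equidist V E x y. \<phi> v = v)"

definition reflective :: "'a set \<Rightarrow> ('a \<Rightarrow> 'a \<Rightarrow> bool) \<Rightarrow> bool" where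
  "reflective V E \<longleftrightarrow> (\<forall>x y. E x y \<longrightarrow> (\<exists>\<phi>. reflection V E x y \<phi>))"

definition edge_parallel :: "'a set \<Rightarrow> ('a \<Rightarrow> 'a \<Rightarrow> bool) \<Rightarrow> 'a \<Rightarrow> 'a \<Rightarrow> 'a \<Rightarrow> 'a \<Rightarrow> bool" where
  "edge_parallel V E x y x' y' \<longleftrightarrow> x' \<in> halfspace V E x y \<and> y' \<in> halfspace V E y x"

end

theory Submission
  imports Defs
begin

text \<open>Let \<open>\<phi>\<close> be the reflection from \<open>x\<close> to \<open>y\<close>. Every vertex \<open>v\<close> of
  the halfspace \<open>V\<^sub>x\<^sup>y\<close> is joined to \<open>\<phi> v \<in> V\<^sub>y\<^sup>x\<close>, so
  \<open>(v, \<phi> v)\<close> is an edge parallel to \<open>(x, y)\<close>; it lies in \<open>B\<^sub>1(z)\<close> as soon as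
  \<open>v\<close> is within distance one of both \<open>z\<close> and \<open>\<phi> z\<close>. If \<open>z\<close> lies in a
  halfspace, \<open>z\<close> or \<open>\<phi> z\<close> is such a \<open>v\<close>. If \<open>z\<close> is equidistant from
  \<open>x\<close> and \<open>y\<close>, then \<open>\<phi> z = z\<close> and it suffices to find a neighbour of
  \<open>z\<close> closer to \<open>x\<close> than to \<open>y\<close>. This is done by induction on
  \<open>d(z, x)\<close>: a neighbour \<open>u\<close> of \<open>z\<close> on a shortest path to \<open>x\<close> either
  works, or is again equidistant; then induction gives an edge \<open>u \<sim> a\<close>
  with \<open>a\<close> closer to \<open>x\<close>, and the reflection from \<open>u\<close> to \<open>a\<close> fixes
  \<open>y\<close> and moves \<open>z\<close> to a neighbour that works.\<close>

lemma is_walk_append: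
  "is_walk E xs \<Longrightarrow> is_walk E ys \<Longrightarrow> last xs = hd ys \<Longrightarrow> is_walk E (xs @ tl ys)"
proof (induction E xs rule: is_walk.induct)
  case (2 E v)
  then show ?case by (cases ys) auto
qed auto

lemma is_walk_rev: "symp E \<Longrightarrow> is_walk E ws \<Longrightarrow> is_walk E (rev ws)"
proof (induction E ws rule: is_walk.induct)
  case (3 E u v vs)
  then have "is_walk E (rev (v # vs) @ tl [v, u])"
    by (intro is_walk_append) (auto dest: sympD)
  then show ?case by simp
qed auto

lemma is_walk_map:
  assumes "\<And>u v. u \<in> V \<Longrightarrow> v \<in> V \<Longrightarrow> E u v \<Longrightarrow> E (f u) (f v)"
  shows "is_walk E ws \<Longrightarrow> set ws \<subseteq> V \<Longrightarrow> is_walk E (map f ws)"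
  by (induction ws rule: induct_list012) (auto intro: assms)

locale connected_simple_graph =
  fixes V :: "'a set" and E :: "'a \<Rightarrow> 'a \<Rightarrow> bool"
  assumes simple: "simple_graph V E" and connected: "connected_graph V E"
begin

abbreviation d :: "'a \<Rightarrow> 'a \<Rightarrow> nat" where "d \<equiv> gdist V E"

lemma adj_in_V: "E u v \<Longrightarrow> u \<in> V" "E u v \<Longrightarrow> v \<in> V"
  using simple unfolding simple_graph_def by blast+

lemma adj_sym: "E u v \<Longrightarrow> E v u"
  using simple unfolding simple_graph_def by blast

lemma adj_irrefl: "\<not> E u u"
  using simple unfolding simple_graph_def by blast

lemma symp_adj: "symp E"
  using adj_sym by (rule sympI)

lemma gdist_le_walk:
  assumes "is_walk E ws" "set ws \<subseteq> V" "ws \<noteq> []"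
  shows "d (hd ws) (last ws) \<le> length ws - 1"
proof -
  have "walk_between V E (hd ws) (last ws) (length ws - 1)"
    using assms unfolding walk_between_def by (intro exI[of _ ws]) auto
  then show ?thesis unfolding gdist_def by (rule Least_le)
qed

lemma obtain_shortest_walk:
  assumes "u \<in> V" "v \<in> V"
  obtains ws where "is_walk E ws" "set ws \<subseteq> V" "hd ws = u" "last ws = v"
    "length ws = Suc (d u v)"
proof -
  have "walk_between V E u v (d u v)"
    using connected assms unfolding connected_graph_def gdist_def by (meson LeastI_ex)
  then show ?thesis using that unfolding walk_between_def by blast
qed

lemma gdist_self: "u \<in> V \<Longrightarrow> d u u = 0"
  using gdist_le_walk[of "[u]"] by simp

lemma gdist_eq_0_iff: "u \<in> V \<Longrightarrow> v \<in> V \<Longrightarrow> d u v = 0 \<longleftrightarrow> u = v"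
proof
  assume "u \<in> V" "v \<in> V" "d u v = 0"
  then obtain ws where "hd ws = u" "last ws = v" "length ws = 1"
    using obtain_shortest_walk by (metis One_nat_def)
  then show "u = v" by (cases ws) auto
qed (simp add: gdist_self)

lemma gdist_adj: "E u v \<Longrightarrow> d u v = 1"
  using gdist_le_walk[of "[u, v]"] gdist_eq_0_iff[of u v] adj_in_V adj_irrefl
  by fastforce

lemma gdist_triangle:
  assumes "u \<in> V" "v \<in> V" "w \<in> V"
  shows "d u w \<le> d u v + d v w"
proof -
  obtain xs where xs: "is_walk E xs" "set xs \<subseteq> V" "hd xs = u" "last xs = v"
    "length xs = Suc (d u v)"
    using assms(1,2) by (rule obtain_shortest_walk)
  obtain ys where ys: "is_walk E ys" "set ys \<subseteq> V" "hd ys = v" "last ys = w"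
    "length ys = Suc (d v w)"
    using assms(2,3) by (rule obtain_shortest_walk)
  have "set (tl ys) \<subseteq> set ys" by (cases ys) auto
  then have "d (hd (xs @ tl ys)) (last (xs @ tl ys)) \<le> length (xs @ tl ys) - 1"
    using xs ys by (intro gdist_le_walk is_walk_append) auto
  moreover have "hd (xs @ tl ys) = u" "last (xs @ tl ys) = w"
    using xs ys by (cases xs; cases ys; auto)+
  ultimately show ?thesis using xs ys by simp
qed

lemma gdist_adj_le: "E u w \<Longrightarrow> v \<in> V \<Longrightarrow> d u v \<le> Suc (d w v)"
  using gdist_triangle[of u w v] gdist_adj adj_in_V by fastforce

lemma gdist_homomorphism_le:
  assumes hom_V: "\<And>v. v \<in> V \<Longrightarrow> f v \<in> V"
    and hom_E: "\<And>u v. u \<in> V \<Longrightarrow> v \<in> V \<Longrightarrow> E u v \<Longrightarrow> E (f u) (f v)"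
    and "u \<in> V" "v \<in> V"
  shows "d (f u) (f v) \<le> d u v"
proof -
  obtain ws where ws: "is_walk E ws" "set ws \<subseteq> V" "hd ws = u" "last ws = v"
    "length ws = Suc (d u v)"
    using assms(3,4) by (rule obtain_shortest_walk)
  then have "ws \<noteq> []" by auto
  then have "d (hd (map f ws)) (last (map f ws)) \<le> length (map f ws) - 1"
    using ws hom_V by (intro gdist_le_walk is_walk_map[where E = E, OF hom_E]) auto
  then show ?thesis using ws \<open>ws \<noteq> []\<close> by (simp add: hd_map last_map)
qed

lemma gdist_sym: "u \<in> V \<Longrightarrow> v \<in> V \<Longrightarrow> d u v = d v u"
proof -
  have le: "d v u \<le> d u v" if uv: "u \<in> V" "v \<in> V" for u v
  proof -
    obtain ws where ws: "is_walk E ws" "set ws \<subseteq> V" "hd ws = u" "last ws = v"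
      "length ws = Suc (d u v)"
      using uv by (rule obtain_shortest_walk)
    then have "ws \<noteq> []" by auto
    then have "d (hd (rev ws)) (last (rev ws)) \<le> length (rev ws) - 1"
      using ws by (intro gdist_le_walk is_walk_rev[OF symp_adj]) auto
    then show ?thesis using ws \<open>ws \<noteq> []\<close> by (simp add: hd_rev last_rev)
  qed
  show "u \<in> V \<Longrightarrow> v \<in> V \<Longrightarrow> d u v = d v u" using le le_antisym by blast
qed

lemma gdist_SucE:
  assumes "u \<in> V" "v \<in> V" "d u v = Suc m"
  obtains w where "E u w" "d w v = m"
proof -
  obtain ws where ws: "is_walk E ws" "set ws \<subseteq> V" "hd ws = u" "last ws = v"
    "length ws = Suc (Suc m)"
    using assms(1,2) by (rule obtain_shortest_walk) (simp add: assms(3))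
  then obtain w rest where ws_eq: "ws = u # w # rest"
    by (cases ws; cases "tl ws") auto
  have "E u w" using ws ws_eq by auto
  have "d (hd (w # rest)) (last (w # rest)) \<le> length (w # rest) - 1"
    using ws ws_eq by (intro gdist_le_walk) auto
  then have "d w v \<le> m" using ws ws_eq by simp
  moreover have "d u v \<le> Suc (d w v)" using \<open>E u w\<close> assms(2) by (rule gdist_adj_le)
  ultimately show ?thesis using that \<open>E u w\<close> assms(3) by simp
qed

lemma gdist_automorphism:
  assumes aut: "graph_automorphism V E f" and "u \<in> V" "v \<in> V"
  shows "d (f u) (f v) = d u v"
proof -
  have bij: "bij_betw f V V" and adj_iff: "\<And>u v. u \<in> V \<Longrightarrow> v \<in> V \<Longrightarrow> E u v \<longleftrightarrow> E (f u) (f v)"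
    using aut unfolding graph_automorphism_def by blast+
  define g where "g = inv_into V f"
  have f_V: "\<And>v. v \<in> V \<Longrightarrow> f v \<in> V" and g_V: "\<And>v. v \<in> V \<Longrightarrow> g v \<in> V"
    using bij bij_betw_inv_into[OF bij] unfolding g_def bij_betw_def by auto
  have f_g: "\<And>v. v \<in> V \<Longrightarrow> f (g v) = v" and g_f: "\<And>v. v \<in> V \<Longrightarrow> g (f v) = v"
    using bij unfolding g_def by (auto simp: bij_betw_def f_inv_into_f inv_into_f_f)
  have g_E: "E (g u) (g v)" if "u \<in> V" "v \<in> V" "E u v" for u v
    using that adj_iff[OF g_V g_V] f_g by simp
  have "d (g (f u)) (g (f v)) \<le> d (f u) (f v)"
    using assms(2,3) by (intro gdist_homomorphism_le[OF g_V g_E] f_V)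
  moreover have "d (f u) (f v) \<le> d u v"
    using assms(2,3) adj_iff by (intro gdist_homomorphism_le[OF f_V]) blast+
  moreover have "g (f u) = u" "g (f v) = v" using assms(2,3) g_f by blast+
  ultimately show ?thesis by (metis antisym)
qed

context
  fixes a b f assumes refl: "reflection V E a b f"
begin

lemma reflection_automorphism: "graph_automorphism V E f"
  using refl by (simp add: reflection_def)

lemma reflection_in_V: "v \<in> V \<Longrightarrow> f v \<in> V"
  using reflection_automorphism unfolding graph_automorphism_def bij_betw_def by blast

lemma reflection_gdist: "u \<in> V \<Longrightarrow> v \<in> V \<Longrightarrow> d (f u) (f v) = d u v"
  using reflection_automorphism by (rule gdist_automorphism)

lemma reflection_involutive: "v \<in> V \<Longrightarrow> f (f v) = v"
  using refl by (simp add: reflection_def)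

lemma reflection_maps_source: "f a = b"
  using refl by (simp add: reflection_def)

lemma reflection_fixes_equidist: "v \<in> equidist V E a b \<Longrightarrow> f v = v"
  using refl by (simp add: reflection_def)

lemma reflection_adj_halfspace:
  assumes "v \<in> halfspace V E a b"
  shows "E v (f v)"
proof -
  have edges: "{{p, q} | p q. p \<in> halfspace V E a b \<and> q \<in> halfspace V E b a \<and> E p q}
      = {{c, f c} | c. c \<in> halfspace V E a b}"
    using refl by (simp add: reflection_def)
  have "{v, f v} \<in> {{p, q} | p q. p \<in> halfspace V E a b \<and> q \<in> halfspace V E b a \<and> E p q}"
    unfolding edges using assms by blast
  then obtain p q where "{v, f v} = {p, q}" "E p q" by blast
  then show ?thesis by (auto simp: doubleton_eq_iff dest: adj_sym)
qed

lemma reflection_halfspace_iff: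
  assumes "E a b" "v \<in> V"
  shows "f v \<in> halfspace V E b a \<longleftrightarrow> v \<in> halfspace V E a b"
proof -
  have "a \<in> V" "b \<in> V" using assms(1) adj_in_V by auto
  moreover have "f a = b" "f b = a"
    using reflection_maps_source reflection_involutive[OF \<open>a \<in> V\<close>] by auto
  ultimately show ?thesis
    using assms(2) reflection_gdist[of v a] reflection_gdist[of v b] reflection_in_V
    unfolding halfspace_def by auto
qed

end

lemma reflection_neighbour_closer:
  assumes f: "reflection V E u a f" and "E w u" "x \<in> V" and y: "y \<in> equidist V E u a"
    and wx: "d w x = Suc (Suc k)" and ax: "d a x = k"
  shows "E w (f w) \<and> d (f w) x = Suc k \<and> d (f w) y = d w y"
proof (intro conjI)
  have "w \<in> V" "u \<in> V" "y \<in> V" using \<open>E w u\<close> y adj_in_V unfolding equidist_def by auto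
  have "a \<in> V" using reflection_in_V[OF f \<open>u \<in> V\<close>] reflection_maps_source[OF f] by simp
  have "d w x \<le> d w a + d a x" using \<open>w \<in> V\<close> \<open>a \<in> V\<close> \<open>x \<in> V\<close> by (rule gdist_triangle)
  then have "w \<in> halfspace V E u a"
    using wx ax gdist_adj[OF \<open>E w u\<close>] \<open>w \<in> V\<close> unfolding halfspace_def by auto
  then show "E w (f w)" by (rule reflection_adj_halfspace[OF f])
  show "d (f w) y = d w y"
    using reflection_gdist[OF f \<open>w \<in> V\<close> \<open>y \<in> V\<close>] reflection_fixes_equidist[OF f y] by simp
  have "d (f w) a = 1"
    using reflection_gdist[OF f \<open>w \<in> V\<close> \<open>u \<in> V\<close>] reflection_maps_source[OF f]
      gdist_adj[OF \<open>E w u\<close>]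
    by simp
  moreover have "d (f w) x \<le> d (f w) a + d a x"
    using adj_in_V(2)[OF \<open>E w (f w)\<close>] \<open>a \<in> V\<close> \<open>x \<in> V\<close> by (rule gdist_triangle)
  moreover have "d w x \<le> Suc (d (f w) x)" using \<open>E w (f w)\<close> \<open>x \<in> V\<close> by (rule gdist_adj_le)
  ultimately show "d (f w) x = Suc k" using wx ax by simp
qed

lemma parallel_edge_in_ball1:
  assumes f: "reflection V E x y f" and "E x y" "z \<in> V"
    and v: "v \<in> halfspace V E x y" "d v z \<le> 1" "d v (f z) \<le> 1"
  shows "\<exists>x' y'. x' \<in> ball1 V E z \<and> y' \<in> ball1 V E z \<and> E x' y' \<and> edge_parallel V E x y x' y'"
proof (intro exI conjI)
  have "v \<in> V" using v unfolding halfspace_def by blast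
  then show "v \<in> ball1 V E z" using v unfolding ball1_def by blast
  have "d (f v) z = d (f v) (f (f z))" using reflection_involutive[OF f \<open>z \<in> V\<close>] by simp
  also have "\<dots> = d v (f z)" using f \<open>v \<in> V\<close> reflection_in_V[OF f \<open>z \<in> V\<close>] by (rule reflection_gdist)
  finally show "f v \<in> ball1 V E z"
    using v reflection_in_V[OF f \<open>v \<in> V\<close>] unfolding ball1_def by simp
  show "E v (f v)" using f v(1) by (rule reflection_adj_halfspace)
  show "edge_parallel V E x y v (f v)"
    using v(1) reflection_halfspace_iff[OF f \<open>E x y\<close> \<open>v \<in> V\<close>] unfolding edge_parallel_def by blast
qed

end

locale reflective_graph = connected_simple_graph +
  assumes reflective: "reflective V E"
begin

lemma equidistant_neighbour_towards:
  assumes "E x y" "w \<in> V" "d w x = Suc m" "d w y = Suc m"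
  shows "\<exists>a. E w a \<and> d a x = m \<and> d a y = Suc m"
  using assms(2-4)
proof (induction m arbitrary: w)
  case (0 w)
  have "x \<in> V" using adj_in_V assms(1) by blast
  obtain u where "E w u" "d u x = 0"
    by (rule gdist_SucE[OF 0(1) \<open>x \<in> V\<close> 0(2)])
  then have "u = x" using gdist_eq_0_iff adj_in_V(2)[OF \<open>E w u\<close>] \<open>x \<in> V\<close> by blast
  then show ?case using \<open>E w u\<close> \<open>d u x = 0\<close> gdist_adj[OF assms(1)] by auto
next
  case (Suc k w)
  have "x \<in> V" "y \<in> V" using adj_in_V assms(1) by auto
  obtain u where "E w u" and ux: "d u x = Suc k"
    by (rule gdist_SucE[OF Suc.prems(1) \<open>x \<in> V\<close> Suc.prems(2)])
  have "u \<in> V" using adj_in_V \<open>E w u\<close> by blast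
  have "d w y \<le> Suc (d u y)" using \<open>E w u\<close> \<open>y \<in> V\<close> by (rule gdist_adj_le)
  moreover have "d u y \<le> d u x + d x y"
    using \<open>u \<in> V\<close> \<open>x \<in> V\<close> \<open>y \<in> V\<close> by (rule gdist_triangle)
  ultimately consider (far) "d u y = Suc (Suc k)" | (equidistant) "d u y = Suc k"
    using Suc.prems ux gdist_adj[OF assms(1)] by linarith
  then show ?case
  proof cases
    case far
    then show ?thesis using \<open>E w u\<close> ux by blast
  next
    case equidistant
    obtain a where "E u a" and ax: "d a x = k" and ay: "d a y = Suc k"
      using Suc.IH[OF \<open>u \<in> V\<close> ux equidistant] by blast
    obtain f where f: "reflection V E u a f"
      using reflective \<open>E u a\<close> unfolding reflective_def by blast
    have "y \<in> equidist V E u a"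
      using equidistant ay gdist_sym \<open>u \<in> V\<close> adj_in_V(2)[OF \<open>E u a\<close>] \<open>y \<in> V\<close>
      unfolding equidist_def by auto
    from reflection_neighbour_closer[OF f \<open>E w u\<close> \<open>x \<in> V\<close> this Suc.prems(2) ax]
    show ?thesis using Suc.prems(3) by auto
  qed
qed

lemma equidist_neighbour_in_halfspace:
  assumes "E x y" "z \<in> equidist V E x y"
  obtains a where "E z a" "a \<in> halfspace V E x y"
proof -
  have "x \<in> V" "y \<in> V" "z \<in> V" "d z x = d z y"
    using assms adj_in_V unfolding equidist_def by auto
  moreover have "x \<noteq> y" using assms(1) adj_irrefl by blast
  ultimately obtain m where "d z x = Suc m" "d z y = Suc m"
    using gdist_eq_0_iff by (metis not0_implies_Suc)
  then obtain a where "E z a" "d a x = m" "d a y = Suc m"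
    using equidistant_neighbour_towards[OF assms(1) \<open>z \<in> V\<close>] by blast
  then show ?thesis using that adj_in_V unfolding halfspace_def by auto
qed

lemma halfspace_vertex_near:
  assumes f: "reflection V E x y f" and "E x y" "z \<in> V"
  obtains v where "v \<in> halfspace V E x y" "d v z \<le> 1" "d v (f z) \<le> 1"
proof -
  consider (x_side) "z \<in> halfspace V E x y" | (y_side) "z \<in> halfspace V E y x"
    | (mirror) "z \<in> equidist V E x y"
    using \<open>z \<in> V\<close> unfolding halfspace_def equidist_def by force
  then show ?thesis
  proof cases
    case x_side
    have "E z (f z)" using f x_side by (rule reflection_adj_halfspace)
    then show ?thesis using that[OF x_side] gdist_self[OF \<open>z \<in> V\<close>] gdist_adj by simp
  next
    case y_side
    have fz: "f (f z) = z" "f z \<in> V"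
      using reflection_involutive[OF f \<open>z \<in> V\<close>] reflection_in_V[OF f \<open>z \<in> V\<close>] by auto
    then have "f z \<in> halfspace V E x y"
      using y_side reflection_halfspace_iff[OF f \<open>E x y\<close>, of "f z"] by simp
    moreover from this have "E (f z) z" using reflection_adj_halfspace[OF f] fz by metis
    ultimately show ?thesis using that gdist_self[OF \<open>f z \<in> V\<close>] gdist_adj by simp
  next
    case mirror
    obtain a where "E z a" "a \<in> halfspace V E x y"
      using \<open>E x y\<close> mirror by (rule equidist_neighbour_in_halfspace)
    then show ?thesis
      using that reflection_fixes_equidist[OF f mirror] gdist_adj[OF adj_sym] by simp
  qed
qed

end

theorem lemma2p4:
  fixes V :: "'a set" and E :: "'a \<Rightarrow> 'a \<Rightarrow> bool" and x y z :: 'a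
  assumes "finite V" and "simple_graph V E" and "connected_graph V E"
    and "reflective V E"
    and "E x y" and "z \<in> V"
  shows "\<exists>x' y'. x' \<in> ball1 V E z \<and> y' \<in> ball1 V E z \<and> E x' y'
           \<and> edge_parallel V E x y x' y'"
proof -
  interpret reflective_graph V E
    using assms(2-4) by unfold_locales
  obtain f where f: "reflection V E x y f"
    using assms(4,5) unfolding reflective_def by blast
  obtain v where "v \<in> halfspace V E x y" "gdist V E v z \<le> 1" "gdist V E v (f z) \<le> 1"
    using f assms(5,6) by (rule halfspace_vertex_near)
  then show ?thesis using f assms(5,6) by (intro parallel_edge_in_ball1)
qed

end
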